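(* Suppose $\xi\star\pi\in\perp\!\!\!\perp$. Let $\xi'\star\pi'$ be obtained from $\xi\star\pi$ by replacing some occurrences of $A$ by $(\ell_u)A=k_{u\cdot\pi_0}$ and some occurrences of the variables $q_0,\dots,q_N$ by $t_0,\dots,t_N$ respectively, where $t_0,\dots,t_N,u$ are arbitrary terms. Then, for every term $t$, $\xi'\star\pi'\in\perp\!\!\!\perp$ and $\xi'\star\pi'\cdot t\in\perp\!\!\!\perp$.
   Context: Fix an integer $N\ge 0$. The set $\Lambda$ of terms is the smallest set containing the constants $B,C,I,K,W,cc,A$ and $p,q_0,\dots,q_N$, closed under application $(\xi)\eta$ (written $\xi\eta$), and containing, for each sequence $(\xi_i)_{i\in\mathbb N}$ of closed terms (no occurrence of $p,q_0,\dots,q_N$), a constant $\bigwedge_i\xi_i$ (injectively, well-founded). Stacks: finite sequences $t_0\cdot\ldots\cdot t_{n-1}\cdot\pi_0$ of terms, $\pi_0$ the empty stack; $\Pi$ the set of stacks. If $\pi=t_0\cdot\ldots\cdot t_{n-1}\cdot\pi_0$, then $\pi\cdot t$ denotes the stack $t_0\cdot\ldots\cdot t_{n-1}\cdot t\cdot\pi_0$. $\ell_t=((C)(B)CB)t$, $k_{\pi_0}=A$, $k_{t\cdot\pi}=(\ell_t)k_\pi$; $\sigma=(BW)(C)(B)BB$, $\underline0=(K)I$, $\underline{n+1}=(\sigma)\underline n$. Execution $\succ$: least preorder on $\Lambda\times\Pi$ with $(\xi)\eta\star\pi\succ\xi\star\eta\cdot\pi$; $B\star\xi\cdot\eta\cdot\zeta\cdot\pi\succ\xi\star(\eta)\zeta\cdot\pi$;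 $C\star\xi\cdot\eta\cdot\zeta\cdot\pi\succ\xi\star\zeta\cdot\eta\cdot\pi$; $I\star\xi\cdot\pi\succ\xi\star\pi$; $K\star\xi\cdot\eta\cdot\pi\succ\xi\star\pi$; $W\star\xi\cdot\eta\cdot\pi\succ\xi\star\eta\cdot\eta\cdot\pi$; $cc\star\xi\cdot\pi\succ\xi\star k_\pi\cdot\pi$; $A\star\xi\cdot\pi\succ\xi\star\pi_0$; $\bigwedge_i\xi_i\star\underline n\cdot\pi\succ\xi_n\star\pi$. Pole $\perp\!\!\!\perp=\{\xi\star\pi:\exists\varpi,\ \xi\star\pi\succ p\star\varpi\}$. *)

theory Defs
  imports Main
begin

text \<open>Constructor Inf f stands for the
 constant bigwedge_i f(i); it is an atomic constant (well-formedness below requires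
 its components to be closed terms of Lambda).\<close>

datatype trm =
    Bc | Cc | Ic | Kc | Wc | CCc | Ac
  | Pv
  | Qv nat
  | App trm trm
  | Inf "nat \<Rightarrow> trm"

fun closed :: "trm \<Rightarrow> bool" where
  "closed Pv = False"
| "closed (Qv i) = False"
| "closed (App a b) = (closed a \<and> closed b)"
| "closed _ = True"

text \<open>Membership in the set Lambda of terms, for the fixed N.\<close>
primrec wf :: "nat \<Rightarrow> trm \<Rightarrow> bool" where
  "wf N Bc = True" | "wf N Cc = True" | "wf N Ic = True" | "wf N Kc = True"
| "wf N Wc = True" | "wf N CCc = True" | "wf N Ac = True" | "wf N Pv = True"
| "wf N (Qv i) = (i \<le> N)"
| "wf N (App a b) = (wf N a \<and> wf N b)"
| "wf N (Inf f) = (\<forall>i. closed (f i) \<and> wf N (f i))"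

type_synonym stack = "trm list"

definition ell :: "trm \<Rightarrow> trm" where
  "ell t = App (App Cc (App (App Bc Cc) Bc)) t"

fun kst :: "stack \<Rightarrow> trm" where
  "kst [] = Ac"
| "kst (t # \<pi>) = App (ell t) (kst \<pi>)"

definition sigma :: trm where
  "sigma = App (App Bc Wc) (App Cc (App (App Bc Bc) Bc))"

fun numeral_trm :: "nat \<Rightarrow> trm" where
  "numeral_trm 0 = App Kc Ic"
| "numeral_trm (Suc n) = App sigma (numeral_trm n)"

inductive step :: "trm \<times> stack \<Rightarrow> trm \<times> stack \<Rightarrow> bool" where
  push: "step (App \<xi> \<eta>, \<pi>) (\<xi>, \<eta> # \<pi>)"
| B: "step (Bc, \<xi> # \<eta> # \<zeta> # \<pi>) (\<xi>, App \<eta> \<zeta> # \<pi>)"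
| C: "step (Cc, \<xi> # \<eta> # \<zeta> # \<pi>) (\<xi>, \<zeta> # \<eta> # \<pi>)"
| I: "step (Ic, \<xi> # \<pi>) (\<xi>, \<pi>)"
| K: "step (Kc, \<xi> # \<eta> # \<pi>) (\<xi>, \<pi>)"
| W: "step (Wc, \<xi> # \<eta> # \<pi>) (\<xi>, \<eta> # \<eta> # \<pi>)"
| cc: "step (CCc, \<xi> # \<pi>) (\<xi>, kst \<pi> # \<pi>)"
| A: "step (Ac, \<xi> # \<pi>) (\<xi>, [])"
| Inf: "step (Inf f, numeral_trm n # \<pi>) (f n, \<pi>)"

abbreviation exec :: "trm \<times> stack \<Rightarrow> trm \<times> stack \<Rightarrow> bool" where
  "exec \<equiv> step\<^sup>*\<^sup>*"

definition pole :: "(trm \<times> stack) set" where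
  "pole = {(\<xi>, \<pi>). \<exists>\<rho>. exec (\<xi>, \<pi>) (Pv, \<rho>)}"

inductive repl :: "nat \<Rightarrow> trm \<Rightarrow> (nat \<Rightarrow> trm) \<Rightarrow> trm \<Rightarrow> trm \<Rightarrow> bool"
  for N u ts where
  refl: "repl N u ts s s"
| rA: "repl N u ts Ac (kst [u])"
| rQ: "i \<le> N \<Longrightarrow> repl N u ts (Qv i) (ts i)"
| rApp: "repl N u ts a a' \<Longrightarrow> repl N u ts b b' \<Longrightarrow> repl N u ts (App a b) (App a' b')"

end

theory Submission
  imports Defs
begin

text \<open>The modified process simulates the original one, even with an arbitrary stack tail e
 appended: each step is matched by finitely many steps, so reaching p is preserved. The
 replacement must be generalized to A \<mapsto> k_\<rho> for arbitrary \<rho>, since a continuation captured by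
 cc now carries the tail. The delicate step is A itself: A empties the stack, while k_\<rho> runs
 its argument on \<rho>, which then plays the role of the new tail.\<close>

inductive subst_rel :: "(nat \<Rightarrow> trm) \<Rightarrow> trm \<Rightarrow> trm \<Rightarrow> bool" for ts where
  refl: "subst_rel ts s s"
| Ac_kst: "subst_rel ts Ac (kst \<rho>)"
| Qv: "subst_rel ts (Qv i) (ts i)"
| App: "subst_rel ts a a' \<Longrightarrow> subst_rel ts b b' \<Longrightarrow> subst_rel ts (App a b) (App a' b')"

lemma repl_imp_subst_rel: "repl N u ts a b \<Longrightarrow> subst_rel ts a b"
proof (induction rule: repl.induct)
  case rA
  show ?case using subst_rel.Ac_kst[of ts "[u]"] .
qed (auto intro: subst_rel.intros)

lemma subst_rel_AppD:
  "subst_rel ts (App a b) x \<Longrightarrow> \<exists>a' b'. x = App a' b' \<and> subst_rel ts a a' \<and> subst_rel ts b b'"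
  by (cases rule: subst_rel.cases) (auto intro: subst_rel.refl)

lemma subst_rel_AcD: "subst_rel ts Ac y \<Longrightarrow> y = Ac \<or> (\<exists>\<rho>. y = kst \<rho>)"
  by (cases rule: subst_rel.cases) auto

lemma subst_rel_kst:
  "list_all2 (subst_rel ts) \<pi> \<pi>' \<Longrightarrow> subst_rel ts (kst \<pi>) (kst (\<pi>' @ e))"
  by (induction rule: list_all2_induct) (auto simp: ell_def intro: subst_rel.intros)

fun rigid :: "trm \<Rightarrow> bool" where
  "rigid Ac = False"
| "rigid (Qv i) = False"
| "rigid (App a b) = (rigid a \<and> rigid b)"
| "rigid _ = True"

lemma subst_rel_rigid: "subst_rel ts x y \<Longrightarrow> rigid x \<Longrightarrow> y = x"
  by (induction rule: subst_rel.induct) auto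

lemma rigid_numeral_trm: "rigid (numeral_trm n)"
  by (induction n) (auto simp: sigma_def)

lemma exec_ell: "exec (App (ell t) X, a # \<pi>) (X, App a t # \<pi>)"
proof -
  let ?D = "App (App Bc Cc) Bc"
  have "exec (App (ell t) X, a # \<pi>) (Cc, ?D # t # X # a # \<pi>)"
    unfolding ell_def by (meson step.push converse_rtranclp_into_rtranclp rtranclp.rtrancl_refl)
  also have "exec \<dots> (Bc, Cc # Bc # X # t # a # \<pi>)"
    by (meson step.C step.push converse_rtranclp_into_rtranclp rtranclp.rtrancl_refl)
  also have "exec \<dots> (App Bc X, a # t # \<pi>)"
    by (meson step.B step.C converse_rtranclp_into_rtranclp rtranclp.rtrancl_refl)
  also have "exec \<dots> (X, App a t # \<pi>)"
    by (meson step.B step.push converse_rtranclp_into_rtranclp rtranclp.rtrancl_refl)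
  finally show ?thesis .
qed

lemma exec_kst: "exec (kst \<rho>, a # \<pi>) (a, \<rho>)"
proof (induction \<rho> arbitrary: a \<pi>)
  case Nil
  show ?case using step.A by fastforce
next
  case (Cons t \<rho>)
  have "exec (kst (t # \<rho>), a # \<pi>) (kst \<rho>, App a t # \<pi>)" using exec_ell by simp
  also have "exec \<dots> (App a t, \<rho>)" by (rule Cons)
  also have "exec \<dots> (a, t # \<rho>)" using step.push by fastforce
  finally show ?case .
qed

text \<open>Rigid heads act on related stacks in lock-step; only cc sees the tail e, through the
 captured continuation.\<close>
lemma step_rigid_head_simulation:
  assumes "step (h, \<pi>) (y, \<sigma>)" and "rigid h" and "list_all2 (subst_rel ts) \<pi> \<pi>'"
  shows "\<exists>y' \<sigma>'. step (h, \<pi>' @ e) (y', \<sigma>' @ e) \<and> subst_rel ts y y'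
    \<and> list_all2 (subst_rel ts) \<sigma> \<sigma>'"
  using assms(1)
proof (cases rule: step.cases)
  case (push \<eta>)
  with assms(3) show ?thesis
    by (intro exI[of _ y] exI[of _ "\<eta> # \<pi>'"]) (auto intro: step.push subst_rel.refl)
next
  case (B \<eta> \<zeta> \<rho>)
  with assms(3) obtain a b c \<rho>' where "\<pi>' = a # b # c # \<rho>'" "subst_rel ts y a" "subst_rel ts \<eta> b"
      "subst_rel ts \<zeta> c" "list_all2 (subst_rel ts) \<rho> \<rho>'"
    by (auto simp: list_all2_Cons1)
  with B show ?thesis
    by (intro exI[of _ a] exI[of _ "App b c # \<rho>'"]) (auto intro: step.B subst_rel.App)
next
  case (C \<eta> \<zeta> \<rho>)
  with assms(3) obtain a b c \<rho>' where "\<pi>' = a # b # c # \<rho>'" "subst_rel ts y a" "subst_rel ts \<eta> b"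
      "subst_rel ts \<zeta> c" "list_all2 (subst_rel ts) \<rho> \<rho>'"
    by (auto simp: list_all2_Cons1)
  with C show ?thesis
    by (intro exI[of _ a] exI[of _ "c # b # \<rho>'"]) (auto intro: step.C)
next
  case I
  with assms(3) obtain a \<rho>' where "\<pi>' = a # \<rho>'" "subst_rel ts y a" "list_all2 (subst_rel ts) \<sigma> \<rho>'"
    by (auto simp: list_all2_Cons1)
  with I show ?thesis
    by (intro exI[of _ a] exI[of _ "\<rho>'"]) (auto intro: step.I)
next
  case (K \<eta>)
  with assms(3) obtain a b \<rho>' where "\<pi>' = a # b # \<rho>'" "subst_rel ts y a" "list_all2 (subst_rel ts) \<sigma> \<rho>'"
    by (auto simp: list_all2_Cons1)
  with K show ?thesis
    by (intro exI[of _ a] exI[of _ "\<rho>'"]) (auto intro: step.K)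
next
  case (W \<eta> \<rho>)
  with assms(3) obtain a b \<rho>' where "\<pi>' = a # b # \<rho>'" "subst_rel ts y a" "subst_rel ts \<eta> b"
      "list_all2 (subst_rel ts) \<rho> \<rho>'"
    by (auto simp: list_all2_Cons1)
  with W show ?thesis
    by (intro exI[of _ a] exI[of _ "b # b # \<rho>'"]) (auto intro: step.W)
next
  case (cc \<rho>)
  with assms(3) obtain a \<rho>' where "\<pi>' = a # \<rho>'" "subst_rel ts y a"
      "list_all2 (subst_rel ts) \<rho> \<rho>'"
    by (auto simp: list_all2_Cons1)
  with cc show ?thesis
    by (intro exI[of _ a] exI[of _ "kst (\<rho>' @ e) # \<rho>'"]) (auto intro: step.cc subst_rel_kst)
next
  case (A \<rho>)
  with assms(2) show ?thesis by simp
next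
  case (Inf f n)
  with assms(3) obtain \<rho>' where "\<pi>' = numeral_trm n # \<rho>'" "list_all2 (subst_rel ts) \<sigma> \<rho>'"
    by (auto simp: list_all2_Cons1 subst_rel_rigid[OF _ rigid_numeral_trm])
  with Inf show ?thesis
    by (intro exI[of _ "f n"] exI[of _ "\<rho>'"]) (simp add: step.Inf subst_rel.refl)
qed

lemma step_simulation:
  assumes "step (x, \<pi>) (y, \<sigma>)" and "subst_rel ts x x'" and "list_all2 (subst_rel ts) \<pi> \<pi>'"
  shows "\<exists>y' \<sigma>' e'. exec (x', \<pi>' @ e) (y', \<sigma>' @ e') \<and> subst_rel ts y y'
    \<and> list_all2 (subst_rel ts) \<sigma> \<sigma>'"
proof (cases "rigid x")
  case True
  with assms(2) have "x' = x" by (rule subst_rel_rigid)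
  moreover obtain y' \<sigma>' where "step (x, \<pi>' @ e) (y', \<sigma>' @ e)" "subst_rel ts y y'"
      "list_all2 (subst_rel ts) \<sigma> \<sigma>'"
    using step_rigid_head_simulation[OF assms(1) True assms(3)] by blast
  ultimately show ?thesis by blast
next
  case False
  then show ?thesis
  proof (cases x)
    case (App a b)
    with assms(1) have "y = a" "\<sigma> = b # \<pi>" by (auto elim: step.cases)
    moreover obtain a' b' where "x' = App a' b'" "subst_rel ts a a'" "subst_rel ts b b'"
      using App assms(2) subst_rel_AppD by blast
    ultimately show ?thesis
      using assms(3) step.push[of a' b' "\<pi>' @ e"]
      by (intro exI[of _ a'] exI[of _ "b' # \<pi>'"] exI[of _ e]) auto
  next
    case Ac
    with assms(1) obtain \<rho> where "\<pi> = y # \<rho>" "\<sigma> = []" by (auto elim: step.cases)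
    with assms(3) obtain a \<rho>' where "\<pi>' = a # \<rho>'" "subst_rel ts y a"
      by (auto simp: list_all2_Cons1)
    from Ac assms(2) consider "x' = Ac" | \<rho>'' where "x' = kst \<rho>''"
      using subst_rel_AcD by blast
    then show ?thesis
    proof cases
      case 1
      then have "exec (x', \<pi>' @ e) (a, [] @ [])" using \<open>\<pi>' = a # \<rho>'\<close> step.A by fastforce
      with \<open>\<sigma> = []\<close> \<open>subst_rel ts y a\<close> show ?thesis by blast
    next
      case (2 \<rho>'')
      then have "exec (x', \<pi>' @ e) (a, [] @ \<rho>'')" using \<open>\<pi>' = a # \<rho>'\<close> exec_kst by simp
      with \<open>\<sigma> = []\<close> \<open>subst_rel ts y a\<close> show ?thesis by blast
    qed
  next
    case (Qv i)
    with assms(1) have False by (cases rule: step.cases) simp_all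
    then show ?thesis ..
  qed simp_all
qed

lemma exec_Pv_subst_rel:
  assumes "exec c (Pv, \<rho>)" and "subst_rel ts (fst c) x'" and "list_all2 (subst_rel ts) (snd c) \<pi>'"
  shows "(x', \<pi>' @ e) \<in> pole"
  using assms
proof (induction c arbitrary: x' \<pi>' e rule: converse_rtranclp_induct)
  case base
  then have "x' = Pv" using subst_rel_rigid by simp
  then show ?case unfolding pole_def by blast
next
  case (step c d)
  obtain x \<pi> y \<sigma> where "c = (x, \<pi>)" "d = (y, \<sigma>)" by fastforce
  with step.hyps(1) step.prems obtain y' \<sigma>' e' where sim: "exec (x', \<pi>' @ e) (y', \<sigma>' @ e')"
      "subst_rel ts y y'" "list_all2 (subst_rel ts) \<sigma> \<sigma>'"
    using step_simulation by (metis fst_conv snd_conv)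
  with \<open>d = (y, \<sigma>)\<close> have "(y', \<sigma>' @ e') \<in> pole" using step.IH by simp
  with sim(1) show ?case unfolding pole_def by (blast intro: rtranclp_trans)
qed

lemma pole_subst_rel:
  assumes "(x, \<pi>) \<in> pole" and "subst_rel ts x x'" and "list_all2 (subst_rel ts) \<pi> \<pi>'"
  shows "(x', \<pi>' @ e) \<in> pole"
  using assms exec_Pv_subst_rel[of "(x, \<pi>)"] unfolding pole_def by auto

theorem lemma3:
  fixes N :: nat and \<xi> \<xi>' u t :: trm and \<pi> \<pi>' :: stack and ts :: "nat \<Rightarrow> trm"
  assumes "wf N \<xi>" and "\<forall>s\<in>set \<pi>. wf N s"
    and "\<forall>i\<le>N. wf N (ts i)" and "wf N u" and "wf N t"
    and "(\<xi>, \<pi>) \<in> pole"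
    and "repl N u ts \<xi> \<xi>'" and "list_all2 (repl N u ts) \<pi> \<pi>'"
  shows "(\<xi>', \<pi>') \<in> pole \<and> (\<xi>', \<pi>' @ [t]) \<in> pole"
proof -
  have "subst_rel ts \<xi> \<xi>'" using assms(7) repl_imp_subst_rel by blast
  moreover have "list_all2 (subst_rel ts) \<pi> \<pi>'"
    using assms(8) by (rule list_all2_mono) (rule repl_imp_subst_rel)
  ultimately show ?thesis
    using pole_subst_rel[OF assms(6)] by (metis append_Nil2)
qed

end
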